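(* Let $G$ be a finite subset of $\mathbb{N}^2$ that has at least one connected v-bridge. If $G$ contains a connected component $C$ (of the full grid graph of $G$) such that $C\cap(\{r_G\}\times\mathbb{N})\neq\emptyset$, $C\cap(\mathbb{N}\times\{t_G\})\neq\emptyset$ and $C\cap(\mathbb{N}\times\{b_G\})=\emptyset$, then there exists a point $\vec x_{NE}\in G\setminus C$ such that $E(\vec x_{NE})\notin G$, $\vec x_{NE}\in\mathbb{N}\times\{t_G\}$ and $\vec x_{NE}\notin\{r_G\}\times\mathbb{N}$.
   Context: The full grid graph of $V\subseteq\mathbb{Z}^2$ has vertex set $V$ and an edge between $\vec x,\vec y$ iff $\|\vec x-\vec y\|=1$; paths and connected components are taken in this graph. For a finite $S\subseteq\mathbb{Z}^2$ let $l_S=\min_{(x,y)\in S}x$, $r_S=\max_{(x,y)\in S}x$, $b_S=\min_{(x,y)\in S}y$, $t_S=\max_{(x,y)\in S}y$. An h-bridge of $S$ is a subset of $S$ of the form $\{(l_S,y),(r_S,y)\}$; a v-bridge is a subset of $S$ of the form $\{(x,b_S),(x,t_S)\}$. A bridge is connected if there is a simple path in (the full grid graph of) $S$ connecting its two points. Directions: $N(x,y)=(x,y+1)$, $E(x,y)=(x+1,y)$, $S(x,y)=(x,y-1)$, $W(x,y)=(x-1,y)$. *)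

theory Defs
  imports Main
begin

type_synonym pt = "nat \<times> nat"

definition adj :: "pt \<Rightarrow> pt \<Rightarrow> bool" where
  "adj p q \<longleftrightarrow> (fst p = fst q \<and> (snd p = snd q + 1 \<or> snd q = snd p + 1))
              \<or> (snd p = snd q \<and> (fst p = fst q + 1 \<or> fst q = fst p + 1))"

definition lS :: "pt set \<Rightarrow> nat" where "lS S = Min (fst ` S)"
definition rS :: "pt set \<Rightarrow> nat" where "rS S = Max (fst ` S)"
definition bS :: "pt set \<Rightarrow> nat" where "bS S = Min (snd ` S)"
definition tS :: "pt set \<Rightarrow> nat" where "tS S = Max (snd ` S)"

definition simple_path :: "pt set \<Rightarrow> pt list \<Rightarrow> pt \<Rightarrow> pt \<Rightarrow> bool" where
  "simple_path S ps p q \<longleftrightarrow> ps \<noteq> [] \<and> hd ps = p \<and> last ps = q \<and> distinct ps \<and> set ps \<subseteq> S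
     \<and> (\<forall>i. Suc i < length ps \<longrightarrow> adj (ps ! i) (ps ! Suc i))"

definition connected_in :: "pt set \<Rightarrow> pt \<Rightarrow> pt \<Rightarrow> bool" where
  "connected_in S p q \<longleftrightarrow> (\<exists>ps. simple_path S ps p q)"

definition is_component :: "pt set \<Rightarrow> pt set \<Rightarrow> bool" where
  "is_component S C \<longleftrightarrow> (\<exists>p\<in>S. C = {q. connected_in S p q})"

definition v_bridge :: "pt set \<Rightarrow> nat \<Rightarrow> bool" where
  "v_bridge S x \<longleftrightarrow> (x, bS S) \<in> S \<and> (x, tS S) \<in> S"

definition connected_v_bridge :: "pt set \<Rightarrow> nat \<Rightarrow> bool" where
  "connected_v_bridge S x \<longleftrightarrow> v_bridge S x \<and> connected_in S (x, bS S) (x, tS S)"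

definition dirE :: "pt \<Rightarrow> pt" where "dirE p = (fst p + 1, snd p)"

end

theory Submission
  imports Defs "HOL-Analysis.Fashoda_Theorem"
begin

text \<open>Let \<open>x\<close> be the column of a connected v-bridge and \<open>D\<close> the component of \<open>(x, b\<^sub>G)\<close>; since \<open>C\<close>
  misses the bottom row, \<open>D \<noteq> C\<close>. Walk right along the top row from \<open>(x, t\<^sub>G)\<close>, staying in \<open>D\<close>.
  If the row is left before column \<open>r\<^sub>G\<close>, the last point reached is the required \<open>x\<^sub>N\<^sub>E\<close>.
  Otherwise \<open>D\<close> joins \<open>(x, b\<^sub>G)\<close> to the corner \<open>(r\<^sub>G, t\<^sub>G)\<close>, while \<open>C\<close> joins a point of the top row
  left of the corner to a point of the right column; by the Fashoda meet theorem these two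
  connections intersect, contradicting \<open>C \<noteq> D\<close>.\<close>

definition taxicab_dist :: "int \<times> int \<Rightarrow> int \<times> int \<Rightarrow> int" where
  "taxicab_dist p q = \<bar>fst p - fst q\<bar> + \<bar>snd p - snd q\<bar>"

lemma taxicab_dist_commute: "taxicab_dist p q = taxicab_dist q p"
  by (simp add: taxicab_dist_def abs_minus_commute)

definition lattice_adj :: "int \<times> int \<Rightarrow> int \<times> int \<Rightarrow> bool" where
  "lattice_adj p q \<longleftrightarrow> taxicab_dist p q = 1"

lemma lattice_adj_odd: "lattice_adj p q \<Longrightarrow> odd (fst p + snd p - (fst q + snd q))"
proof -
  have "odd (a + b)" if "\<bar>a\<bar> + \<bar>b\<bar> = (1::int)" for a b
  proof -
    have "a = 0 \<and> (b = 1 \<or> b = -1) \<or> b = 0 \<and> (a = 1 \<or> a = -1)"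
      using that by arith
    then show ?thesis by auto
  qed
  then show "lattice_adj p q \<Longrightarrow> ?thesis"
    unfolding lattice_adj_def taxicab_dist_def by (smt (verit))
qed

lemma lattice_adj_no_triangle:
  assumes "lattice_adj a b" "lattice_adj b c" shows "\<not> lattice_adj c a"
proof
  assume "lattice_adj c a"
  then have "odd ((fst a + snd a - (fst b + snd b)) + (fst b + snd b - (fst c + snd c)) + (fst c + snd c - (fst a + snd a)))"
    using assms lattice_adj_odd by (metis odd_add)
  then show False by simp
qed

definition lattice_point :: "int \<times> int \<Rightarrow> real^2" where
  "lattice_point p = vector [of_int (fst p), of_int (snd p)]"

lemma lattice_point_nth [simp]:
  "lattice_point p $ 1 = of_int (fst p)" "lattice_point p $ 2 = of_int (snd p)"
  by (simp_all add: lattice_point_def)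

definition l1_dist :: "real^2 \<Rightarrow> real^2 \<Rightarrow> real" where
  "l1_dist u v = \<bar>u$1 - v$1\<bar> + \<bar>u$2 - v$2\<bar>"

lemma l1_dist_triangle: "l1_dist u w \<le> l1_dist u v + l1_dist v w"
  unfolding l1_dist_def by linarith

lemma l1_dist_lattice_point: "l1_dist (lattice_point p) (lattice_point q) = of_int (taxicab_dist p q)"
  by (simp add: l1_dist_def taxicab_dist_def)

lemma l1_dist_closed_segment:
  assumes "z \<in> closed_segment a b"
  shows "l1_dist a z + l1_dist z b = l1_dist a b"
proof -
  obtain u where u: "0 \<le> u" "u \<le> 1" "z = (1 - u) *\<^sub>R a + u *\<^sub>R b"
    using assms by (auto simp: closed_segment_def)
  have "\<bar>a$k - z$k\<bar> + \<bar>z$k - b$k\<bar> = \<bar>a$k - b$k\<bar>" for k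
  proof -
    have "z$k = (1 - u) * a$k + u * b$k" using u(3) by simp
    then have "a$k - z$k = u * (a$k - b$k)" "z$k - b$k = (1 - u) * (a$k - b$k)"
      by (simp_all add: algebra_simps)
    then have "\<bar>a$k - z$k\<bar> = u * \<bar>a$k - b$k\<bar>" "\<bar>z$k - b$k\<bar> = (1 - u) * \<bar>a$k - b$k\<bar>"
      using u(1,2) by (simp_all add: abs_mult)
    then show ?thesis by (simp add: algebra_simps)
  qed
  from this[of 1] this[of 2] show ?thesis unfolding l1_dist_def by linarith
qed

lemma unit_segments_share_endpoint:
  assumes "lattice_adj p p'" "lattice_adj q q'"
    and "z \<in> closed_segment (lattice_point p) (lattice_point p')"
    and "z \<in> closed_segment (lattice_point q) (lattice_point q')"
  shows "{p, p'} \<inter> {q, q'} \<noteq> {}"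
proof
  \<comment> \<open>Along a unit segment the \<open>l\<^sub>1\<close>-distances to the two endpoints add up to 1, so the endpoints
    of the two segments are pairwise at taxicab distance at most 1. Were they all distinct,
    \<open>p, q, q'\<close> would be pairwise adjacent, which parity forbids.\<close>
  assume disjoint: "{p, p'} \<inter> {q, q'} = {}"
  let ?v = lattice_point
  have on_p: "l1_dist (?v p) z + l1_dist z (?v p') = 1"
    using assms(1,3) l1_dist_closed_segment l1_dist_lattice_point by (simp add: lattice_adj_def)
  have on_q: "l1_dist (?v q) z + l1_dist z (?v q') = 1"
    using assms(2,4) l1_dist_closed_segment l1_dist_lattice_point by (simp add: lattice_adj_def)
  have sym: "l1_dist u v = l1_dist v u" for u v by (simp add: l1_dist_def abs_minus_commute)
  have "l1_dist (?v p) (?v q) + l1_dist (?v p') (?v q') \<le> 2"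
    using on_p on_q l1_dist_triangle[of "?v p" "?v q" z] l1_dist_triangle[of "?v p'" "?v q'" z]
      sym[of z "?v q"] sym[of z "?v q'"] sym[of z "?v p'"] by linarith
  moreover have "l1_dist (?v p) (?v q') + l1_dist (?v p') (?v q) \<le> 2"
    using on_p on_q l1_dist_triangle[of "?v p" "?v q'" z] l1_dist_triangle[of "?v p'" "?v q" z]
      sym[of z "?v q"] sym[of z "?v q'"] sym[of z "?v p'"] by linarith
  ultimately have le2: "taxicab_dist p q + taxicab_dist p' q' \<le> 2" "taxicab_dist p q' + taxicab_dist p' q \<le> 2"
    by (simp_all add: l1_dist_lattice_point)
  have pos: "taxicab_dist a b \<ge> 1" if "a \<noteq> b" for a b
    using that by (cases a, cases b) (auto simp: taxicab_dist_def)
  have "taxicab_dist p q = 1" "taxicab_dist p q' = 1"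
    using le2 pos[of p q] pos[of p' q'] pos[of p q'] pos[of p' q] disjoint by auto
  then have "lattice_adj p q" "lattice_adj q' p"
    by (simp_all add: lattice_adj_def taxicab_dist_commute)
  then show False using lattice_adj_no_triangle assms(2) by blast
qed

fun polygon_path :: "(int \<times> int) list \<Rightarrow> real \<Rightarrow> real^2" where
  "polygon_path [] = linepath 0 0"
| "polygon_path [p] = linepath (lattice_point p) (lattice_point p)"
| "polygon_path (p # q # ps) = linepath (lattice_point p) (lattice_point q) +++ polygon_path (q # ps)"

lemma
  assumes "ps \<noteq> []"
  shows path_polygon_path: "path (polygon_path ps)"
    and pathstart_polygon_path: "pathstart (polygon_path ps) = lattice_point (hd ps)"
    and pathfinish_polygon_path: "pathfinish (polygon_path ps) = lattice_point (last ps)"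
  using assms by (induction ps rule: polygon_path.induct) auto

lemma path_image_polygon_path_subset:
  assumes "convex K" "ps \<noteq> []" "lattice_point ` set ps \<subseteq> K"
  shows "path_image (polygon_path ps) \<subseteq> K"
  using assms(2,3)
proof (induction ps rule: polygon_path.induct)
  case (3 p q ps)
  then have "closed_segment (lattice_point p) (lattice_point q) \<subseteq> K"
    using assms(1) by (simp add: closed_segment_subset)
  then show ?case
    using 3 by (simp add: path_image_join pathstart_polygon_path)
qed auto

lemma path_image_polygon_path:
  assumes "length ps \<ge> 2" "z \<in> path_image (polygon_path ps)"
  obtains i where "Suc i < length ps" "z \<in> closed_segment (lattice_point (ps!i)) (lattice_point (ps!Suc i))"
  using assms
proof (induction ps arbitrary: thesis rule: polygon_path.induct)
  case (3 p q ps)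
  consider "z \<in> closed_segment (lattice_point p) (lattice_point q)"
    | "ps \<noteq> []" "z \<in> path_image (polygon_path (q # ps))"
    using "3.prems"(3) by (cases ps) (auto simp: path_image_join pathstart_polygon_path)
  then show ?case
  proof cases
    case 1
    then show ?thesis using "3.prems"(1)[of 0] by simp
  next
    case 2
    obtain i where "Suc i < length (q # ps)"
      "z \<in> closed_segment (lattice_point ((q # ps) ! i)) (lattice_point ((q # ps) ! Suc i))"
      by (rule "3.IH") (use 2 in \<open>auto simp: Suc_le_eq\<close>)
    then show ?thesis using "3.prems"(1)[of "Suc i"] by simp
  qed
qed auto

lemma lattice_walks_meet:
  assumes "successively lattice_adj A" "successively lattice_adj Q"
    and "length A \<ge> 2" "length Q \<ge> 2"
    and "z \<in> path_image (polygon_path A)" "z \<in> path_image (polygon_path Q)"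
  shows "set A \<inter> set Q \<noteq> {}"
proof -
  obtain i j where i: "Suc i < length A" "z \<in> closed_segment (lattice_point (A!i)) (lattice_point (A!Suc i))"
    and j: "Suc j < length Q" "z \<in> closed_segment (lattice_point (Q!j)) (lattice_point (Q!Suc j))"
    using path_image_polygon_path assms(3-6) by metis
  have "{A!i, A!Suc i} \<inter> {Q!j, Q!Suc j} \<noteq> {}"
    using unit_segments_share_endpoint[OF _ _ i(2) j(2)] successively_nth assms(1,2) i(1) j(1) by blast
  moreover have "{A!i, A!Suc i} \<subseteq> set A" "{Q!j, Q!Suc j} \<subseteq> set Q"
    using i(1) j(1) by auto
  ultimately show ?thesis by blast
qed

lemma lattice_walks_cross:
  assumes "successively lattice_adj A" "successively lattice_adj Q"
    and "length A \<ge> 2" "length Q \<ge> 2"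
    and "\<forall>p\<in>set A \<union> set Q. L \<le> fst p \<and> fst p \<le> R \<and> B \<le> snd p \<and> snd p \<le> T"
    and "fst (hd Q) = L" "fst (last Q) = R" "snd (hd A) = B" "snd (last A) = T"
  shows "set A \<inter> set Q \<noteq> {}"
proof -
  let ?a = "lattice_point (L, B)" and ?b = "lattice_point (R, T)"
  have ne: "A \<noteq> []" "Q \<noteq> []" using assms(3,4) by auto
  have "lattice_point p \<in> cbox ?a ?b" if "p \<in> set A \<union> set Q" for p
    using assms(5) that unfolding mem_box_cart forall_2 by simp
  then have "path_image (polygon_path Q) \<subseteq> cbox ?a ?b" "path_image (polygon_path A) \<subseteq> cbox ?a ?b"
    using path_image_polygon_path_subset[OF convex_box(1)] ne by blast+
  then obtain z where "z \<in> path_image (polygon_path Q)" "z \<in> path_image (polygon_path A)"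
    using fashoda[of "polygon_path Q" "polygon_path A" ?a ?b] ne assms(6-9)
    by (auto simp: path_polygon_path pathstart_polygon_path pathfinish_polygon_path)
  then show ?thesis using lattice_walks_meet assms(1-4) by blast
qed

lemma lattice_adj_of_nat: "lattice_adj (map_prod int int p) (map_prod int int q) \<longleftrightarrow> adj p q"
  by (cases p, cases q) (auto simp: adj_def lattice_adj_def taxicab_dist_def)

lemma grid_walks_cross:
  assumes P: "successively adj P" "P \<noteq> []" "snd (hd P) = b" "last P = (r, t)"
    and Q: "successively adj Q" "Q \<noteq> []" "hd Q = (c, t)" "fst (last Q) = r" "c < r"
    and box: "\<forall>p\<in>set P \<union> set Q. fst p \<le> r \<and> b \<le> snd p \<and> snd p \<le> t"
  shows "set P \<inter> set Q \<noteq> {}"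
proof -
  \<comment> \<open>Prolong \<open>P\<close> one step below row \<open>b\<close> and two steps above the corner \<open>(r, t)\<close>, and \<open>Q\<close> leftwards
    along row \<open>t + 1\<close> (where it stays left of column \<open>r\<close> because \<open>c < r\<close>) and one step right of column \<open>r\<close>.
    The prolonged walks cross the box \<open>[-1, r + 1] \<times> [b - 1, t + 2]\<close> vertically and horizontally,
    and none of the added points can be shared.\<close>
  let ?i = "map_prod int int"
  define A where "A = (int (fst (hd P)), int b - 1) # map ?i P @ [(int r, int t + 1), (int r, int t + 2)]"
  define row where "row = map (\<lambda>k. (int k - 1, int t + 1)) [0..<c + 2]"
  define Q' where "Q' = row @ map ?i Q @ [(int r + 1, int (snd (last Q)))]"
  have in_box: "0 \<le> fst p \<and> fst p \<le> int r \<and> int b \<le> snd p \<and> snd p \<le> int t"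
    if image: "p \<in> ?i ` set P \<union> ?i ` set Q" for p
  proof -
    from image have "p \<in> ?i ` (set P \<union> set Q)" by (simp only: image_Un)
    then obtain q where q: "p = ?i q" "q \<in> set P \<union> set Q" by (rule imageE)
    then have "fst q \<le> r \<and> b \<le> snd q \<and> snd q \<le> t" using box by blast
    then show ?thesis using q(1) by (cases q) simp
  qed
  have ends_in_box: "fst (hd P) \<le> r" "b \<le> snd (last Q)" "snd (last Q) \<le> t"
    using box hd_in_set[OF P(2)] last_in_set[OF Q(2)] by auto
  define A_ext where "A_ext = {(int (fst (hd P)), int b - 1), (int r, int t + 1), (int r, int t + 2)}"
  define Q_ext where "Q_ext = set row \<union> {(int r + 1, int (snd (last Q)))}"
  have set_A: "set A = ?i ` set P \<union> A_ext" and set_Q': "set Q' = ?i ` set Q \<union> Q_ext"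
    by (auto simp: A_def A_ext_def Q'_def Q_ext_def)
  have row_box: "-1 \<le> fst p \<and> fst p \<le> int c \<and> snd p = int t + 1" if "p \<in> set row" for p
    using that by (auto simp: row_def)
  have ends: "hd (map ?i P) = (int (fst (hd P)), int b)" "last (map ?i P) = (int r, int t)"
    "hd (map ?i Q) = (int c, int t)" "last (map ?i Q) = (int r, int (snd (last Q)))"
    using P Q by (simp_all add: hd_map last_map map_prod_def split_beta)
  have "successively lattice_adj (map ?i P)" "successively lattice_adj (map ?i Q)"
    using P(1) Q(1) by (simp_all add: successively_map lattice_adj_of_nat)
  moreover have "successively lattice_adj row"
    unfolding row_def successively_conv_nth by (simp del: upt_Suc add: lattice_adj_def taxicab_dist_def)
  ultimately have "successively lattice_adj A" "successively lattice_adj Q'"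
    using ends P(2) Q(2) unfolding A_def Q'_def
    by (simp_all add: successively_append_iff successively_Cons lattice_adj_def taxicab_dist_def row_def last_map)
  moreover have "\<forall>p\<in>set A \<union> set Q'. -1 \<le> fst p \<and> fst p \<le> int r + 1 \<and> int b - 1 \<le> snd p \<and> snd p \<le> int t + 2"
    unfolding set_A set_Q' using in_box row_box ends_in_box Q(5) by (fastforce simp: A_ext_def Q_ext_def)
  moreover have "length A \<ge> 2" "length Q' \<ge> 2" "fst (hd Q') = -1" "fst (last Q') = int r + 1"
    "snd (hd A) = int b - 1" "snd (last A) = int t + 2"
    by (simp_all add: A_def Q'_def row_def upt_rec del: upt_Suc)
  ultimately have meet: "set A \<inter> set Q' \<noteq> {}"
    using lattice_walks_cross[of A Q'] by blast
  have "A_ext \<inter> set Q' = {}" "set A \<inter> Q_ext = {}"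
    unfolding set_A set_Q' using in_box row_box ends_in_box Q(5) by (fastforce simp: A_ext_def Q_ext_def)+
  then have "set A \<inter> set Q' \<subseteq> ?i ` set P \<inter> ?i ` set Q"
    unfolding set_A set_Q' by auto
  moreover have "inj ?i"
    by (rule injI) (auto simp: map_prod_def split: prod.splits)
  ultimately have "set A \<inter> set Q' \<subseteq> ?i ` (set P \<inter> set Q)"
    by (simp add: image_Int)
  with meet show ?thesis by auto
qed

definition grid_edges :: "pt set \<Rightarrow> pt rel" where
  "grid_edges S = {(p, q). p \<in> S \<and> q \<in> S \<and> adj p q}"

definition grid_walk :: "pt set \<Rightarrow> pt list \<Rightarrow> pt \<Rightarrow> pt \<Rightarrow> bool" where
  "grid_walk S ps p q \<longleftrightarrow> ps \<noteq> [] \<and> hd ps = p \<and> last ps = q \<and> set ps \<subseteq> S \<and> successively adj ps"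

lemma simple_path_iff_grid_walk: "Defs.simple_path S ps p q \<longleftrightarrow> grid_walk S ps p q \<and> distinct ps"
  unfolding Defs.simple_path_def grid_walk_def successively_conv_nth by blast

lemma sym_rtrancl_grid_edges: "sym ((grid_edges S)\<^sup>*)"
  by (intro sym_rtrancl) (auto simp: sym_def grid_edges_def adj_def)

lemma rtrancl_grid_edges_mem: "(p, q) \<in> (grid_edges S)\<^sup>* \<Longrightarrow> p \<in> S \<Longrightarrow> q \<in> S"
  by (induction rule: rtrancl_induct) (auto simp: grid_edges_def)

lemma grid_walk_reaches:
  assumes "grid_walk S ps p q" "v \<in> set ps"
  shows "(p, v) \<in> (grid_edges S)\<^sup>*"
proof -
  have "(hd ps, v) \<in> (grid_edges S)\<^sup>*" if "set ps \<subseteq> S" "successively adj ps" "v \<in> set ps" for ps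
    using that
  proof (induction ps)
    case (Cons a ps)
    show ?case
    proof (cases "v = a")
      case False
      then have "ps \<noteq> []" "(hd ps, v) \<in> (grid_edges S)\<^sup>*"
        using Cons by (auto simp: successively_Cons)
      moreover have "(a, hd ps) \<in> grid_edges S"
        using Cons.prems hd_in_set[OF \<open>ps \<noteq> []\<close>] by (auto simp: successively_Cons grid_edges_def)
      ultimately show ?thesis by (simp add: converse_rtrancl_into_rtrancl)
    qed simp
  qed simp
  then show ?thesis using assms by (auto simp: grid_walk_def)
qed

lemma rtrancl_grid_edges_walk:
  assumes "(p, q) \<in> (grid_edges S)\<^sup>*" "p \<in> S"
  obtains ps where "grid_walk S ps p q"
  using assms(1)
proof (induction arbitrary: thesis rule: rtrancl_induct)
  case base
  have "grid_walk S [p] p p" using assms(2) by (simp add: grid_walk_def)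
  then show ?case using base by blast
next
  case (step q w)
  then obtain ps where "grid_walk S ps p q" by blast
  then have "grid_walk S (ps @ [w]) p w"
    using step(2) by (auto simp: grid_walk_def grid_edges_def successively_append_iff)
  then show ?case using step(4) by blast
qed

lemma grid_walk_shortcut:
  assumes "grid_walk S ps p q"
  obtains ps' where "Defs.simple_path S ps' p q"
  using assms
proof (induction "length ps" arbitrary: ps thesis rule: less_induct)
  case less
  show ?case
  proof (cases "distinct ps")
    case True
    then show ?thesis using less by (simp add: simple_path_iff_grid_walk)
  next
    case False
    then obtain xs y ys zs where ps: "ps = xs @ [y] @ ys @ [y] @ zs"
      using not_distinct_decomp by blast
    then have "grid_walk S (xs @ [y] @ zs) p q"
      using less.prems(2) by (auto simp: grid_walk_def successively_append_iff successively_Cons hd_append)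
    then show ?thesis using less ps by force
  qed
qed

lemma connected_in_iff_rtrancl: "connected_in S p q \<longleftrightarrow> p \<in> S \<and> (p, q) \<in> (grid_edges S)\<^sup>*"
proof
  assume "connected_in S p q"
  then obtain ps where ps: "grid_walk S ps p q"
    by (auto simp: connected_in_def simple_path_iff_grid_walk)
  then have "p \<in> set ps" "q \<in> set ps" "set ps \<subseteq> S"
    by (auto simp: grid_walk_def)
  then show "p \<in> S \<and> (p, q) \<in> (grid_edges S)\<^sup>*"
    using grid_walk_reaches[OF ps] by blast
next
  assume "p \<in> S \<and> (p, q) \<in> (grid_edges S)\<^sup>*"
  then obtain ps where "grid_walk S ps p q"
    using rtrancl_grid_edges_walk by blast
  then obtain ps' where "Defs.simple_path S ps' p q"
    by (rule grid_walk_shortcut)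
  then show "connected_in S p q"
    by (auto simp: connected_in_def)
qed

lemma component_eq_reachable:
  assumes "is_component S C" "u \<in> C"
  shows "C = {w. (u, w) \<in> (grid_edges S)\<^sup>*}"
proof -
  obtain p where p: "C = {q. (p, q) \<in> (grid_edges S)\<^sup>*}"
    using assms(1) by (auto simp: is_component_def connected_in_iff_rtrancl)
  then have "(u, p) \<in> (grid_edges S)\<^sup>*"
    using assms(2) sym_rtrancl_grid_edges by (auto dest: symD)
  then show ?thesis using p assms(2) by (auto intro: rtrancl_trans)
qed

lemma component_mem_if_reaches:
  assumes "is_component S C" "u \<in> C" "(w, u) \<in> (grid_edges S)\<^sup>*"
  shows "w \<in> C"
  using assms component_eq_reachable[OF assms(1,2)] sym_rtrancl_grid_edges by (auto dest: symD)

lemma component_subset: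
  assumes "is_component S C" shows "C \<subseteq> S"
  using assms by (auto simp: is_component_def connected_in_iff_rtrancl rtrancl_grid_edges_mem)

lemma row_reaches_or_leaves:
  assumes "(x, y) \<in> S" "x \<le> r"
  shows "((x, y), (r, y)) \<in> (grid_edges S)\<^sup>*
    \<or> (\<exists>m. x < m \<and> m \<le> r \<and> (m, y) \<notin> S \<and> ((x, y), (m - 1, y)) \<in> (grid_edges S)\<^sup>*)"
  using assms(2)
proof (induction r rule: dec_induct)
  case base
  show ?case by simp
next
  case (step n)
  show ?case
  proof (cases "((x, y), (n, y)) \<in> (grid_edges S)\<^sup>*")
    case reach: True
    show ?thesis
    proof (cases "(Suc n, y) \<in> S")
      case True
      have "(n, y) \<in> S"
        using rtrancl_grid_edges_mem[OF reach assms(1)] .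
      then have "((n, y), (Suc n, y)) \<in> grid_edges S"
        using True by (simp add: grid_edges_def adj_def)
      with reach show ?thesis
        by (simp add: rtrancl_into_rtrancl)
    next
      case False
      then show ?thesis
        using reach step.hyps(1) by (intro disjI2 exI[of _ "Suc n"]) simp
    qed
  next
    case False
    then obtain m where "x < m" "m \<le> n" "(m, y) \<notin> S" "((x, y), (m - 1, y)) \<in> (grid_edges S)\<^sup>*"
      using step.IH by blast
    then show ?thesis
      by (intro disjI2 exI[of _ m]) simp
  qed
qed

lemma finite_grid_bounds:
  assumes "finite S" "p \<in> S"
  shows "fst p \<le> rS S" "bS S \<le> snd p" "snd p \<le> tS S"
  using assms by (auto simp: rS_def bS_def tS_def)

lemma grid_connections_cross:
  assumes "finite S" "(x, bS S) \<in> S" "(c, tS S) \<in> S" "c < rS S"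
    and "((x, bS S), (rS S, tS S)) \<in> (grid_edges S)\<^sup>*" "((c, tS S), (rS S, y)) \<in> (grid_edges S)\<^sup>*"
  obtains v where "((x, bS S), v) \<in> (grid_edges S)\<^sup>*" "((c, tS S), v) \<in> (grid_edges S)\<^sup>*"
proof -
  obtain P where P: "grid_walk S P (x, bS S) (rS S, tS S)"
    using rtrancl_grid_edges_walk assms(2,5) by blast
  obtain Q where Q: "grid_walk S Q (c, tS S) (rS S, y)"
    using rtrancl_grid_edges_walk assms(3,6) by blast
  have "set P \<union> set Q \<subseteq> S"
    using P Q by (simp add: grid_walk_def)
  then have box: "\<forall>p\<in>set P \<union> set Q. fst p \<le> rS S \<and> bS S \<le> snd p \<and> snd p \<le> tS S"
    using finite_grid_bounds[OF assms(1)] by blast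
  have "successively adj P" "P \<noteq> []" "snd (hd P) = bS S" "last P = (rS S, tS S)"
    "successively adj Q" "Q \<noteq> []" "hd Q = (c, tS S)" "fst (last Q) = rS S"
    using P Q by (simp_all add: grid_walk_def)
  from grid_walks_cross[OF this assms(4) box] have "set P \<inter> set Q \<noteq> {}" .
  then show ?thesis
    using that grid_walk_reaches[OF P] grid_walk_reaches[OF Q] by blast
qed

lemma component_touching_top_and_right_contains:
  assumes "finite S" "is_component S C" "(c, tS S) \<in> C" "(rS S, y) \<in> C"
    and "(x, bS S) \<in> S" "((x, bS S), (rS S, tS S)) \<in> (grid_edges S)\<^sup>*"
  shows "(x, bS S) \<in> C"
proof -
  have "(c, tS S) \<in> S" "(rS S, y) \<in> S"
    using assms(3,4) component_subset[OF assms(2)] by blast+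
  then have "c \<le> rS S"
    using finite_grid_bounds(1)[OF assms(1)] by fastforce
  then consider "c = rS S" | "c < rS S" by linarith
  then obtain v where "v \<in> C" "((x, bS S), v) \<in> (grid_edges S)\<^sup>*"
  proof cases
    case 1
    then show ?thesis using that assms(3,6) by blast
  next
    case 2
    have "((c, tS S), (rS S, y)) \<in> (grid_edges S)\<^sup>*"
      using assms(4) component_eq_reachable[OF assms(2,3)] by blast
    then show ?thesis
      using grid_connections_cross[OF assms(1,5) \<open>(c, tS S) \<in> S\<close> 2 assms(6)] that
        component_eq_reachable[OF assms(2,3)] by blast
  qed
  then show ?thesis
    using component_mem_if_reaches[OF assms(2)] by blast
qed

theorem mainTheorem4:
  fixes G C :: "(nat \<times> nat) set"
  assumes "finite G"
    and "\<exists>x. connected_v_bridge G x"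
    and "is_component G C"
    and "C \<inter> ({rS G} \<times> UNIV) \<noteq> {}"
    and "C \<inter> (UNIV \<times> {tS G}) \<noteq> {}"
    and "C \<inter> (UNIV \<times> {bS G}) = {}"
  shows "\<exists>xNE \<in> G - C. dirE xNE \<notin> G \<and> xNE \<in> UNIV \<times> {tS G} \<and> xNE \<notin> {rS G} \<times> UNIV"
proof -
  let ?E = "(grid_edges G)\<^sup>*" and ?r = "rS G" and ?t = "tS G"
  obtain x where bot: "(x, bS G) \<in> G" and top: "(x, ?t) \<in> G" and bridge: "((x, bS G), (x, ?t)) \<in> ?E"
    using assms(2) by (auto simp: connected_v_bridge_def v_bridge_def connected_in_iff_rtrancl)
  have bot_not_C: "(x, bS G) \<notin> C"
    using assms(6) by blast
  have "x \<le> ?r"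
    using finite_grid_bounds(1)[OF assms(1) top] by simp
  then consider "((x, ?t), (?r, ?t)) \<in> ?E"
    | m where "x < m" "m \<le> ?r" "(m, ?t) \<notin> G" "((x, ?t), (m - 1, ?t)) \<in> ?E"
    using row_reaches_or_leaves[OF top] by blast
  then show ?thesis
  proof cases
    case 1
    obtain c y where c: "(c, ?t) \<in> C" and y: "(?r, y) \<in> C"
      using assms(4,5) by auto
    have "((x, bS G), (?r, ?t)) \<in> ?E"
      using bridge 1 by (rule rtrancl_trans)
    with bot_not_C show ?thesis
      using component_touching_top_and_right_contains[OF assms(1,3) c y bot] by blast
  next
    case (2 m)
    have reach: "((x, bS G), (m - 1, ?t)) \<in> ?E"
      using bridge 2(4) by (rule rtrancl_trans)
    then have "(m - 1, ?t) \<in> G - C"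
      using rtrancl_grid_edges_mem[OF reach bot] component_mem_if_reaches[OF assms(3)] bot_not_C by blast
    moreover have "dirE (m - 1, ?t) = (m, ?t)"
      using 2(1) by (simp add: dirE_def)
    ultimately show ?thesis
      using 2(1-3) by (intro bexI[of _ "(m - 1, ?t)"]) auto
  qed
qed

end
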